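(* Let $q\ge2$, $t,b\ge1$ and $n\ge bt+1$. Then \[ d_{q,b}(n,t)=\sum_{i=0}^{q-1}d_{q,b}(n-ib-1,t-i). \]
   Context: $\Sigma_q=\{0,\ldots,q-1\}$. A $b$-burst-deletion at position $i\in[1,n-b+1]$ transforms $x_1\cdots x_n$ into $x_1\cdots x_{i-1}x_{i+b}\cdots x_n$. For $n\ge tb+1$, $t\ge0$, $\mathcal{D}_{t,b}(\boldsymbol{x})$ is the set of all length-$(n-tb)$ sequences obtainable from $\boldsymbol{x}$ by $t$ successive $b$-burst-deletions ($\mathcal{D}_{0,b}(\boldsymbol{x})=\{\boldsymbol{x}\}$). The $b$-cyclic sequence $\boldsymbol{X}^{\sigma}_{m,q,b}=X_1\cdots X_m$ has $X_i\equiv\sigma+\lfloor (i-1)/b\rfloor\pmod q$. For $m\ge bs+1$, $s\ge0$, $d_{q,b}(m,s):=|\mathcal{D}_{s,b}(\boldsymbol{X}^0_{m,q,b})|$; $d_{q,b}(m,s)=1$ if $m=bs\ge0$, and $d_{q,b}(m,s)=0$ if $m<bs$ or $s<0$. *)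

theory Defs
  imports Main
begin

text \<open>A b-burst-deletion at (0-indexed) position i,
  with i + b \<le> length x, removes the b consecutive entries x!i, ..., x!(i+b-1).
  (Paper position i corresponds to 0-indexed position i-1.)\<close>

definition burst_del :: "nat \<Rightarrow> nat \<Rightarrow> 'a list \<Rightarrow> 'a list" where
  "burst_del b i x = take i x @ drop (i + b) x"

fun Dtb :: "nat \<Rightarrow> nat \<Rightarrow> 'a list \<Rightarrow> 'a list set" where
  "Dtb 0 b x = {x}"
| "Dtb (Suc t) b x = (\<Union>y\<in>Dtb t b x. {burst_del b i y | i. i + b \<le> length y})"

text \<open>The b-cyclic sequence X^sigma_{m,q,b}: entry number k (1-indexed) is
  (sigma + floor((k-1)/b)) mod q.\<close>
definition cyc_seq :: "nat \<Rightarrow> nat \<Rightarrow> nat \<Rightarrow> nat \<Rightarrow> nat list" where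
  "cyc_seq sigma m q b = map (\<lambda>k. (sigma + k div b) mod q) [0..<m]"

text \<open>d_{q,b}(m,s), with integer arguments to accommodate the boundary conventions.\<close>
definition dqb :: "nat \<Rightarrow> nat \<Rightarrow> int \<Rightarrow> int \<Rightarrow> nat" where
  "dqb q b m s =
     (if s < 0 then 0
      else if m < int b * s then 0
      else if m = int b * s then 1
      else card (Dtb (nat s) b (cyc_seq 0 (nat m) q b)))"

end

theory Submission
  imports Defs
begin

text \<open>Burst deletions are described non-sequentially: y arises from x by s deletions
  exactly when x is y with s blocks of length b inserted. So a nonempty result a # z is
  obtained by deleting j blocks at the front, keeping the entry a = x!(j*b), and deleting
  s - j blocks from the rest. In a b-cyclic sequence the kept entry depends only on
  j mod q, and the j - j mod q surplus blocks may as well be deleted later; hence the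
  deletion set splits disjointly, by first letter, into q deletion sets of suffixes.
  A suffix of a b-cyclic sequence is cyclic up to a shift of the alphabet and of the block
  boundaries, and the same recursion, by induction on the length, shows that these shifts
  do not change the number of deletion results.\<close>

inductive burst_deleted :: "nat \<Rightarrow> nat \<Rightarrow> 'a list \<Rightarrow> 'a list \<Rightarrow> bool" for b where
  Nil: "burst_deleted b 0 [] []"
| Cons: "burst_deleted b s x y \<Longrightarrow> burst_deleted b s (a # x) (a # y)"
| block: "burst_deleted b s x y \<Longrightarrow> length d = b \<Longrightarrow> burst_deleted b (Suc s) (d @ x) y"

lemma length_burst_deleted: "burst_deleted b s x y \<Longrightarrow> length x = length y + s * b"
  by (induction rule: burst_deleted.induct) auto

lemma burst_deleted_refl: "burst_deleted b 0 x x"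
  by (induction x) (auto intro: burst_deleted.intros)

lemma burst_deleted_append:
  "burst_deleted b s x y \<Longrightarrow> burst_deleted b s' x' y' \<Longrightarrow>
     burst_deleted b (s + s') (x @ x') (y @ y')"
proof (induction rule: burst_deleted.induct)
  case Nil
  then show ?case by simp
next
  case (Cons s x y a)
  then show ?case by (auto intro: burst_deleted.Cons)
next
  case (block s x y d)
  then show ?case using burst_deleted.block[of b "s + s'" "x @ x'" "y @ y'" d] by simp
qed

lemma burst_deleted_blocks: "length x = k * b \<Longrightarrow> burst_deleted b k x []"
proof (induction k arbitrary: x)
  case 0
  then show ?case by (auto intro: burst_deleted.Nil)
next
  case (Suc k)
  then have "burst_deleted b (Suc k) (take b x @ drop b x) []"
    by (intro burst_deleted.block) auto
  then show ?case by simp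
qed

lemma burst_deleted_append_split:
  assumes "burst_deleted b s x w" and "w = u @ v"
  obtains x1 x2 s1 s2 where "x = x1 @ x2" "s = s1 + s2"
    and "burst_deleted b s1 x1 u" and "burst_deleted b s2 x2 v"
proof -
  have "burst_deleted b s x w \<Longrightarrow> w = u @ v \<Longrightarrow>
     \<exists>x1 x2 s1 s2. x = x1 @ x2 \<and> s = s1 + s2 \<and> burst_deleted b s1 x1 u \<and> burst_deleted b s2 x2 v" for w
  proof (induction arbitrary: u rule: burst_deleted.induct)
    case Nil
    then show ?case by (simp add: burst_deleted.Nil)
  next
    case (Cons s x y a)
    show ?case
    proof (cases u)
      case Nil
      with Cons.prems have "v = a # y" by simp
      with Cons.hyps(1) have "burst_deleted b s (a # x) v"
        by (simp add: burst_deleted.Cons)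
      moreover from Nil have "burst_deleted b 0 [] u"
        by (simp add: burst_deleted.Nil)
      moreover have "a # x = [] @ a # x" "s = 0 + s"
        by simp_all
      ultimately show ?thesis by blast
    next
      case (Cons a' u')
      with \<open>a # y = u @ v\<close> have "y = u' @ v" "u = a # u'"
        by simp_all
      from Cons.IH[OF this(1)] obtain x1 x2 s1 s2 where
        "x = x1 @ x2" "s = s1 + s2" "burst_deleted b s1 x1 u'" "burst_deleted b s2 x2 v"
        by blast
      moreover from this(3) \<open>u = a # u'\<close> have "burst_deleted b s1 (a # x1) u"
        by (simp add: burst_deleted.Cons)
      moreover from \<open>x = x1 @ x2\<close> have "a # x = (a # x1) @ x2"
        by simp
      ultimately show ?thesis by blast
    qed
  next
    case (block s x y d)
    from block.IH[OF block.prems] obtain x1 x2 s1 s2 where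
      "x = x1 @ x2" "s = s1 + s2" "burst_deleted b s1 x1 u" "burst_deleted b s2 x2 v"
      by blast
    moreover from this(3) block.hyps(2) have "burst_deleted b (Suc s1) (d @ x1) u"
      by (rule burst_deleted.block)
    moreover from \<open>x = x1 @ x2\<close> \<open>s = s1 + s2\<close> have "d @ x = (d @ x1) @ x2" "Suc s = Suc s1 + s2"
      by simp_all
    ultimately show ?case by blast
  qed
  with assms that show ?thesis by blast
qed

lemma burst_deleted_burst_del:
  assumes "burst_deleted b s x y" and "i + b \<le> length y"
  shows "burst_deleted b (Suc s) x (burst_del b i y)"
proof -
  have "y = take i y @ (take b (drop i y) @ drop (i + b) y)"
    by (metis append_take_drop_id drop_drop add.commute)
  with assms(1) obtain x1 x23 s1 s23 where
    x: "x = x1 @ x23" "s = s1 + s23" and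
    d1: "burst_deleted b s1 x1 (take i y)" and
    d23: "burst_deleted b s23 x23 (take b (drop i y) @ drop (i + b) y)"
    by (rule burst_deleted_append_split)
  from d23 refl obtain x2 x3 s2 s3 where
    x23: "x23 = x2 @ x3" "s23 = s2 + s3" and
    d2: "burst_deleted b s2 x2 (take b (drop i y))" and
    d3: "burst_deleted b s3 x3 (drop (i + b) y)"
    by (rule burst_deleted_append_split)
  have "length x2 = Suc s2 * b"
    using length_burst_deleted[OF d2] assms(2) by simp
  then have "burst_deleted b (Suc s2) x2 []"
    by (rule burst_deleted_blocks)
  from burst_deleted_append[OF d1 burst_deleted_append[OF this d3]] x x23 show ?thesis
    by (simp add: burst_del_def)
qed

lemma Dtb_Cons: "z \<in> Dtb s b x \<Longrightarrow> a # z \<in> Dtb s b (a # x)"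
proof (induction s arbitrary: z)
  case 0
  then show ?case by simp
next
  case (Suc s)
  then obtain y i where "y \<in> Dtb s b x" "i + b \<le> length y" "z = burst_del b i y"
    by auto
  moreover have "a # burst_del b i y = burst_del b (Suc i) (a # y)"
    by (simp add: burst_del_def)
  ultimately show ?case
    using Suc.IH by fastforce
qed

lemma Dtb_block: "y \<in> Dtb s b x \<Longrightarrow> length d = b \<Longrightarrow> y \<in> Dtb (Suc s) b (d @ x)"
proof (induction s arbitrary: y)
  case 0
  then have "y = burst_del b 0 (d @ x)"
    by (simp add: burst_del_def)
  with 0 show ?case by force
next
  case (Suc s)
  then obtain y' i where "y' \<in> Dtb s b x" "i + b \<le> length y'" "y = burst_del b i y'"
    by auto
  moreover from this(1) Suc.IH Suc.prems(2) have "y' \<in> Dtb (Suc s) b (d @ x)"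
    by blast
  ultimately show ?case by auto
qed

lemma Dtb_iff_burst_deleted: "y \<in> Dtb s b x \<longleftrightarrow> burst_deleted b s x y"
proof
  show "y \<in> Dtb s b x \<Longrightarrow> burst_deleted b s x y"
  proof (induction s arbitrary: y)
    case 0
    then show ?case by (simp add: burst_deleted_refl)
  next
    case (Suc s)
    then obtain y' i where "y' \<in> Dtb s b x" "i + b \<le> length y'" "y = burst_del b i y'"
      by auto
    with Suc.IH show ?case
      by (simp add: burst_deleted_burst_del)
  qed
  show "burst_deleted b s x y \<Longrightarrow> y \<in> Dtb s b x"
  proof (induction rule: burst_deleted.induct)
    case Nil
    then show ?case by simp
  next
    case (Cons s x y a)
    from Cons.IH show ?case by (rule Dtb_Cons)
  next
    case (block s x y d)
    from block.IH block.hyps(2) show ?case by (rule Dtb_block)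
  qed
qed

lemma finite_Dtb: "finite (Dtb s b x)"
proof (induction s)
  case (Suc s)
  have "finite {burst_del b i y | i. i + b \<le> length y}" for y :: "'a list"
    unfolding setcompr_eq_image
    by (intro finite_imageI finite_subset[OF _ finite_atMost[of "length y"]]) auto
  with Suc.IH show ?case by simp
qed simp

lemma Dtb_eq_empty: "length x < s * b \<Longrightarrow> Dtb s b x = {}"
  using length_burst_deleted by (fastforce simp: Dtb_iff_burst_deleted)

lemma Dtb_eq_Nil: "length x = s * b \<Longrightarrow> Dtb s b x = {[]}"
  using length_burst_deleted by (fastforce simp: Dtb_iff_burst_deleted burst_deleted_blocks)

lemma burst_deleted_drop_blocks:
  assumes "burst_deleted b s (drop (l * b) x) z" and "l * b \<le> length x"
  shows "burst_deleted b (l + s) x z"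
proof -
  have "burst_deleted b l (take (l * b) x) []"
    using assms(2) by (intro burst_deleted_blocks) simp
  from burst_deleted_append[OF this assms(1)] show ?thesis
    by simp
qed

lemma burst_deleted_Cons_iff:
  "burst_deleted b s x (a # z) \<longleftrightarrow>
     (\<exists>j\<le>s. j * b < length x \<and> x ! (j * b) = a \<and> burst_deleted b (s - j) (drop (j * b + 1) x) z)"
  (is "_ \<longleftrightarrow> ?rhs s x")
proof
  have "burst_deleted b s x w \<Longrightarrow> w = a # z \<Longrightarrow> ?rhs s x" for w
  proof (induction rule: burst_deleted.induct)
    case Nil
    then show ?case by simp
  next
    case (Cons s x y a')
    then show ?case by auto
  next
    case (block s x y d)
    then obtain j where "j \<le> s" "j * b < length x" "x ! (j * b) = a"
      "burst_deleted b (s - j) (drop (j * b + 1) x) z"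
      by blast
    moreover have "(d @ x) ! (Suc j * b) = x ! (j * b)"
      and "drop (Suc j * b + 1) (d @ x) = drop (j * b + 1) x"
      using block.hyps(2) by (simp_all add: nth_append add.commute)
    ultimately show ?case
      using block.hyps(2) by (intro exI[of _ "Suc j"]) auto
  qed
  then show "burst_deleted b s x (a # z) \<Longrightarrow> ?rhs s x"
    by blast
next
  assume "?rhs s x"
  then obtain j where j: "j \<le> s" "j * b < length x" "x ! (j * b) = a"
    and z: "burst_deleted b (s - j) (drop (j * b + 1) x) z"
    by blast
  have "drop (j * b) x = a # drop (j * b + 1) x"
    using Cons_nth_drop_Suc[OF j(2)] j(3) by simp
  with z have "burst_deleted b (s - j) (drop (j * b) x) (a # z)"
    by (simp add: burst_deleted.Cons)
  with j have "burst_deleted b (j + (s - j)) x (a # z)"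
    by (intro burst_deleted_drop_blocks) simp_all
  with j(1) show "burst_deleted b s x (a # z)"
    by simp
qed

lemma Dtb_decomp_first_letter:
  assumes "0 < q"
    and periodic: "\<And>j. j * b < length x \<Longrightarrow> x ! (j * b) = x ! (j mod q * b)"
    and "s * b < length x"
  shows "Dtb s b x = (\<Union>i\<in>{i. i < q \<and> i \<le> s \<and> i * b < length x}.
                        Cons (x ! (i * b)) ` Dtb (s - i) b (drop (i * b + 1) x))"
proof (intro equalityI subsetI)
  fix y
  assume "y \<in> Dtb s b x"
  then have y: "burst_deleted b s x y"
    by (simp add: Dtb_iff_burst_deleted)
  with assms(3) obtain a z where "y = a # z"
    by (cases y) (auto dest: length_burst_deleted)
  with y obtain j where j: "j \<le> s" "j * b < length x" "x ! (j * b) = a"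
    and z: "burst_deleted b (s - j) (drop (j * b + 1) x) z"
    by (auto simp: burst_deleted_Cons_iff)
  define i where "i = j mod q"
  have "i \<le> j" "i < q"
    using \<open>0 < q\<close> by (simp_all add: i_def)
  then have "(j - i) * b + (i * b + 1) = j * b + 1"
    by (simp add: diff_mult_distrib)
  then have "drop (j * b + 1) x = drop ((j - i) * b) (drop (i * b + 1) x)"
    by simp
  moreover have "(j - i) * b \<le> length (drop (i * b + 1) x)"
    using j(2) \<open>i \<le> j\<close> by (simp add: diff_mult_distrib)
  ultimately have "burst_deleted b ((j - i) + (s - j)) (drop (i * b + 1) x) z"
    using z by (intro burst_deleted_drop_blocks) simp_all
  moreover have "(j - i) + (s - j) = s - i"
    using \<open>i \<le> j\<close> j(1) by simp
  moreover have "i * b < length x"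
    using mult_le_mono1[OF \<open>i \<le> j\<close>, of b] j(2) by linarith
  moreover have "x ! (i * b) = a"
    using periodic[OF j(2)] j(3) by (simp add: i_def)
  ultimately show "y \<in> (\<Union>i\<in>{i. i < q \<and> i \<le> s \<and> i * b < length x}.
                        Cons (x ! (i * b)) ` Dtb (s - i) b (drop (i * b + 1) x))"
    using \<open>y = a # z\<close> \<open>i < q\<close> \<open>i \<le> j\<close> j(1) by (auto simp: Dtb_iff_burst_deleted)
next
  fix y
  assume "y \<in> (\<Union>i\<in>{i. i < q \<and> i \<le> s \<and> i * b < length x}.
                        Cons (x ! (i * b)) ` Dtb (s - i) b (drop (i * b + 1) x))"
  then show "y \<in> Dtb s b x"
    by (auto simp: Dtb_iff_burst_deleted burst_deleted_Cons_iff)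
qed

lemma card_Dtb_decomp_first_letter:
  assumes "0 < q"
    and periodic: "\<And>j. j * b < length x \<Longrightarrow> x ! (j * b) = x ! (j mod q * b)"
    and distinct: "inj_on (\<lambda>i. x ! (i * b)) {i. i < q \<and> i * b < length x}"
    and "s * b < length x"
  shows "card (Dtb s b x) = (\<Sum>i\<in>{i. i < q \<and> i \<le> s \<and> i * b < length x}.
                              card (Dtb (s - i) b (drop (i * b + 1) x)))"
proof -
  let ?I = "{i. i < q \<and> i \<le> s \<and> i * b < length x}"
  have "card (\<Union>i\<in>?I. Cons (x ! (i * b)) ` Dtb (s - i) b (drop (i * b + 1) x)) =
        (\<Sum>i\<in>?I. card (Cons (x ! (i * b)) ` Dtb (s - i) b (drop (i * b + 1) x)))"
  proof (rule card_UN_disjoint)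
    show "\<forall>i\<in>?I. \<forall>j\<in>?I. i \<noteq> j \<longrightarrow>
            Cons (x ! (i * b)) ` Dtb (s - i) b (drop (i * b + 1) x) \<inter>
            Cons (x ! (j * b)) ` Dtb (s - j) b (drop (j * b + 1) x) = {}"
      using inj_onD[OF distinct] by blast
  qed (simp_all add: finite_Dtb)
  then show ?thesis
    by (simp add: Dtb_decomp_first_letter[OF assms(1,2,4)] card_image)
qed

lemma inj_on_add_mod: "inj_on (\<lambda>i. (c + i) mod q) {..<q :: nat}"
proof -
  have le_eq: "i = j" if "i \<le> j" "j < q" "(c + i) mod q = (c + j) mod q" for i j
  proof -
    have "c + i \<le> c + j" using that(1) by simp
    with that(3) obtain k where "c + j = c + i + q * k"
      by (metis mod_eq_nat1E)
    with that(2) show ?thesis by (cases k) auto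
  qed
  show ?thesis
  proof (rule inj_onI)
    fix i j
    assume "i \<in> {..<q}" "j \<in> {..<q}" "(c + i) mod q = (c + j) mod q"
    then show "i = j"
      using le_eq[of i j] le_eq[of j i] by (cases "i \<le> j") auto
  qed
qed

text \<open>The suffix, from 0-indexed position p, of the b-cyclic sequence of length m + p;
  its first block may be shorter than b.\<close>

definition phased_cyc_seq :: "nat \<Rightarrow> nat \<Rightarrow> nat \<Rightarrow> nat \<Rightarrow> nat \<Rightarrow> nat list" where
  "phased_cyc_seq \<sigma> p m q b = map (\<lambda>k. (\<sigma> + (k + p) div b) mod q) [0..<m]"

lemma length_phased_cyc_seq [simp]: "length (phased_cyc_seq \<sigma> p m q b) = m"
  by (simp add: phased_cyc_seq_def)

lemma nth_phased_cyc_seq: "k < m \<Longrightarrow> phased_cyc_seq \<sigma> p m q b ! k = (\<sigma> + (k + p) div b) mod q"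
  by (simp add: phased_cyc_seq_def)

lemma drop_phased_cyc_seq:
  "drop n (phased_cyc_seq \<sigma> p m q b) = phased_cyc_seq \<sigma> (p + n) (m - n) q b"
  by (rule nth_equalityI) (simp_all add: nth_phased_cyc_seq algebra_simps)

lemma cyc_seq_eq_phased_cyc_seq: "cyc_seq \<sigma> m q b = phased_cyc_seq \<sigma> 0 m q b"
  by (simp add: cyc_seq_def phased_cyc_seq_def)

lemma nth_block_phased_cyc_seq:
  "0 < b \<Longrightarrow> j * b < m \<Longrightarrow> phased_cyc_seq \<sigma> p m q b ! (j * b) = (\<sigma> + p div b + j) mod q"
  by (simp add: nth_phased_cyc_seq add.commute add.left_commute)

lemma card_Dtb_phased_cyc_seq_decomp:
  assumes "0 < b" and "0 < q" and "s * b < m"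
  shows "card (Dtb s b (phased_cyc_seq \<sigma> p m q b)) =
    (\<Sum>i\<in>{i. i < q \<and> i \<le> s \<and> i * b < m}.
       card (Dtb (s - i) b (phased_cyc_seq \<sigma> (p + (i * b + 1)) (m - (i * b + 1)) q b)))"
proof -
  let ?x = "phased_cyc_seq \<sigma> p m q b"
  have "?x ! (j * b) = ?x ! (j mod q * b)" if "j * b < m" for j
  proof -
    have "j mod q * b < m"
      using mult_le_mono1[OF mod_less_eq_dividend[of j q], of b] that by linarith
    then show ?thesis
      using that \<open>0 < b\<close> by (simp add: nth_block_phased_cyc_seq mod_add_right_eq)
  qed
  moreover have "inj_on (\<lambda>i. ?x ! (i * b)) {i. i < q \<and> i * b < m}"
  proof -
    have "inj_on (\<lambda>i. (\<sigma> + p div b + i) mod q) {i. i < q \<and> i * b < m}"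
      using inj_on_add_mod by (rule inj_on_subset) auto
    then show ?thesis
      by (rule inj_on_cong[THEN iffD1, rotated]) (simp add: nth_block_phased_cyc_seq \<open>0 < b\<close>)
  qed
  ultimately show ?thesis
    using card_Dtb_decomp_first_letter[of q b ?x s] assms by (simp add: drop_phased_cyc_seq)
qed

lemma card_Dtb_phased_cyc_seq:
  assumes "0 < b" and "0 < q"
  shows "card (Dtb s b (phased_cyc_seq \<sigma> p m q b)) = card (Dtb s b (cyc_seq 0 m q b))"
proof (induction m arbitrary: s \<sigma> p rule: less_induct)
  case (less m)
  consider "m < s * b" | "m = s * b" | "s * b < m"
    by linarith
  then show ?case
  proof cases
    case 1
    then show ?thesis by (simp add: Dtb_eq_empty cyc_seq_def)
  next
    case 2
    then show ?thesis by (simp add: Dtb_eq_Nil cyc_seq_def)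
  next
    case 3
    let ?I = "{i. i < q \<and> i \<le> s \<and> i * b < m}"
    have IH: "card (Dtb (s - i) b (phased_cyc_seq \<sigma>' (p' + (i * b + 1)) (m - (i * b + 1)) q b)) =
      card (Dtb (s - i) b (cyc_seq 0 (m - (i * b + 1)) q b))" if "i \<in> ?I" for i \<sigma>' p'
      using that by (intro less.IH) auto
    have "card (Dtb s b (phased_cyc_seq \<sigma> p m q b)) =
      (\<Sum>i\<in>?I. card (Dtb (s - i) b (cyc_seq 0 (m - (i * b + 1)) q b)))"
      using card_Dtb_phased_cyc_seq_decomp[OF assms 3] IH by simp
    also have "\<dots> = card (Dtb s b (phased_cyc_seq 0 0 m q b))"
      using card_Dtb_phased_cyc_seq_decomp[OF assms 3] IH[where p' = 0] by simp
    finally show ?thesis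
      by (simp add: cyc_seq_eq_phased_cyc_seq)
  qed
qed

lemma dqb_of_nat: "dqb q b (int m) (int s) = card (Dtb s b (cyc_seq 0 m q b))"
proof -
  consider "m < s * b" | "m = s * b" | "s * b < m"
    by linarith
  then show ?thesis
  proof cases
    case 1
    then have "int m < int b * int s"
      by (metis of_nat_less_iff of_nat_mult mult.commute)
    with 1 show ?thesis by (simp add: dqb_def Dtb_eq_empty cyc_seq_def)
  next
    case 2
    then show ?thesis by (simp add: dqb_def Dtb_eq_Nil cyc_seq_def)
  next
    case 3
    then have "int b * int s < int m"
      by (metis of_nat_less_iff of_nat_mult mult.commute)
    then show ?thesis by (simp add: dqb_def)
  qed
qed

lemma dqb_eq_0:
  assumes "m < 0 \<or> s < 0"
  shows "dqb q b m s = 0"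
proof (cases "s < 0")
  case False
  then have "0 \<le> int b * s"
    by simp
  with assms False have "m < int b * s"
    by linarith
  then show ?thesis
    by (simp add: dqb_def)
qed (simp add: dqb_def)

theorem lemma4p8:
  fixes q b t n :: nat
  assumes "q \<ge> 2" and "t \<ge> 1" and "b \<ge> 1" and "n \<ge> b * t + 1"
  shows "dqb q b (int n) (int t) =
           (\<Sum>i = 0..q - 1. dqb q b (int n - int i * int b - 1) (int t - int i))"
proof -
  have "0 < b" "0 < q" "t * b < n"
    using assms by (simp_all add: mult.commute)
  let ?I = "{i. i < q \<and> i \<le> t \<and> i * b < n}"
  let ?d = "\<lambda>i. dqb q b (int n - int i * int b - 1) (int t - int i)"
  have "dqb q b (int n) (int t) = card (Dtb t b (phased_cyc_seq 0 0 n q b))"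
    by (simp add: dqb_of_nat cyc_seq_eq_phased_cyc_seq)
  also have "\<dots> =
    (\<Sum>i\<in>?I. card (Dtb (t - i) b (phased_cyc_seq 0 (0 + (i * b + 1)) (n - (i * b + 1)) q b)))"
    using \<open>0 < b\<close> \<open>0 < q\<close> \<open>t * b < n\<close> by (rule card_Dtb_phased_cyc_seq_decomp)
  also have "\<dots> = (\<Sum>i\<in>?I. ?d i)"
  proof (rule sum.cong)
    fix i
    assume "i \<in> ?I"
    then have "int n - int i * int b - 1 = int (n - (i * b + 1))" "int t - int i = int (t - i)"
      by (simp_all add: of_nat_diff)
    then show "card (Dtb (t - i) b (phased_cyc_seq 0 (0 + (i * b + 1)) (n - (i * b + 1)) q b)) = ?d i"
      using card_Dtb_phased_cyc_seq[OF \<open>0 < b\<close> \<open>0 < q\<close>] by (simp only: dqb_of_nat)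
  qed rule
  also have "\<dots> = (\<Sum>i = 0..q - 1. ?d i)"
  proof (rule sum.mono_neutral_left)
    show "\<forall>i\<in>{0..q - 1} - ?I. ?d i = 0"
    proof
      fix i
      assume "i \<in> {0..q - 1} - ?I"
      then have "n \<le> i * b \<or> t < i"
        using \<open>0 < q\<close> by auto
      then have "int n - int i * int b - 1 < 0 \<or> int t - int i < 0"
        by (auto simp flip: of_nat_mult)
      then show "?d i = 0"
        by (rule dqb_eq_0)
    qed
  qed (use \<open>0 < q\<close> in auto)
  finally show ?thesis .
qed

end
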